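(* For any reals $\underline{w},\overline{w},B$ with $0<\underline{w}\le\overline{w}\le B$, there exist a hospital $h$ with budget $B_h=B$, a finite set $X_h$ of contracts of $h$ whose minimum wage is $\underline{w}$ and maximum wage is $\overline{w}$, and an additive utility function $f_h$ on $X_h$ with nonnegative values, such that every choice function $\mathrm{Ch}_h:2^{X_h}\to2^{X_h}$ satisfying LAD and COM has $w_h(\mathrm{Ch}_h(X'))>\overline{w}\cdot(B-\overline{w})/\underline{w}$ for some $X'\subseteq X_h$.
   Context: A contract of hospital $h$ is $x=(d,h,w)$ with doctor $d$ and wage $x_W=w>0$. For $Y\subseteq X_h$, $w_h(Y)=\sum_{x\in Y}x_W$ and the additive utility is $f_h(Y)=\sum_{x\in Y}f_h(x)$. A choice function is a map $\mathrm{Ch}_h:2^{X_h}\to2^{X_h}$ with $\mathrm{Ch}_h(Y)\subseteq Y$. LAD: for all $Y''\subseteq Y'\subseteq X_h$, $|\mathrm{Ch}_h(Y'')|\le|\mathrm{Ch}_h(Y')|$. COM: for all $Y''\subseteq Y'\subseteq X_h$ with $w_h(Y'')\le\max\{B_h,w_h(\mathrm{Ch}_h(Y'))\}$, $f_h(\mathrm{Ch}_h(Y'))\ge f_h(Y'')$. *)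

theory Defs
  imports Complex_Main
begin

type_synonym contract = "nat \<times> nat \<times> real"

definition doctor :: "contract \<Rightarrow> nat" where "doctor x = fst x"
definition hosp :: "contract \<Rightarrow> nat" where "hosp x = fst (snd x)"
definition wage :: "contract \<Rightarrow> real" where "wage x = snd (snd x)"

definition wsum :: "contract set \<Rightarrow> real" where "wsum Y = (\<Sum>x\<in>Y. wage x)"

definition util :: "(contract \<Rightarrow> real) \<Rightarrow> contract set \<Rightarrow> real" where
  "util f Y = (\<Sum>x\<in>Y. f x)"

definition is_choice :: "contract set \<Rightarrow> (contract set \<Rightarrow> contract set) \<Rightarrow> bool" where
  "is_choice X Ch \<longleftrightarrow> (\<forall>Y. Y \<subseteq> X \<longrightarrow> Ch Y \<subseteq> Y)"

definition LAD :: "contract set \<Rightarrow> (contract set \<Rightarrow> contract set) \<Rightarrow> bool" where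
  "LAD X Ch \<longleftrightarrow> (\<forall>Y'' Y'. Y'' \<subseteq> Y' \<and> Y' \<subseteq> X \<longrightarrow> card (Ch Y'') \<le> card (Ch Y'))"

definition COM :: "contract set \<Rightarrow> real \<Rightarrow> (contract \<Rightarrow> real) \<Rightarrow> (contract set \<Rightarrow> contract set) \<Rightarrow> bool" where
  "COM X B f Ch \<longleftrightarrow> (\<forall>Y'' Y'. Y'' \<subseteq> Y' \<and> Y' \<subseteq> X \<and> wsum Y'' \<le> max B (wsum (Ch Y'))
      \<longrightarrow> util f (Ch Y') \<ge> util f Y'')"

end

theory Submission
  imports Defs
begin

text \<open>Take n = \<lfloor>B / wl\<rfloor> cheap contracts (wage wl, value 1) and n expensive ones
  (wage wu, value n + 1). The cheap block is affordable, so COM forces Ch to keep all of it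
  and LAD then forces Ch X to have at least n contracts. An expensive contract is worth more
  than the whole cheap block, so COM also forbids leaving one out as long as the chosen cheap
  contracts cost at least wu. Hence Ch X either contains all n expensive contracts or at most
  wu / wl cheap ones, and in both cases its total wage exceeds wu (B - wu) / wl.\<close>

lemma wsum_const: "(\<And>x. x \<in> Y \<Longrightarrow> wage x = c) \<Longrightarrow> wsum Y = real (card Y) * c"
  unfolding wsum_def by simp

lemma util_const: "(\<And>x. x \<in> Y \<Longrightarrow> f x = c) \<Longrightarrow> util f Y = real (card Y) * c"
  unfolding util_def by simp

lemma sum_two_levels:
  fixes g :: "'a \<Rightarrow> real"
  assumes "C \<subseteq> L \<union> H" "finite L" "finite H" "L \<inter> H = {}"
    and "\<And>x. x \<in> L \<Longrightarrow> g x = a" "\<And>x. x \<in> H \<Longrightarrow> g x = b"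
  shows "sum g C = real (card (C \<inter> L)) * a + real (card (C \<inter> H)) * b"
proof -
  have "C = (C \<inter> L) \<union> (C \<inter> H)" using assms(1) by blast
  then have "sum g C = sum g ((C \<inter> L) \<union> (C \<inter> H))" by (rule arg_cong)
  also have "\<dots> = sum g (C \<inter> L) + sum g (C \<inter> H)"
    using assms(2-4) by (intro sum.union_disjoint) auto
  finally show ?thesis using assms(5,6) by simp
qed

lemma nat_multiple_bracket:
  fixes a B :: real
  assumes "0 < a" "a \<le> B"
  obtains n :: nat where "1 \<le> n" "real n * a \<le> B" "B < (real n + 1) * a"
proof
  let ?n = "nat \<lfloor>B / a\<rfloor>"
  have "1 \<le> B / a" using assms by simp
  then have "1 \<le> ?n" "real ?n \<le> B / a" "B / a < real ?n + 1" by linarith+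
  with assms(1) show "1 \<le> ?n" "real ?n * a \<le> B" "B < (real ?n + 1) * a"
    by (simp_all add: pos_le_divide_eq pos_divide_less_eq)
qed

lemma card_choice_ge_affordable_unit_block:
  assumes "is_choice X Ch" "LAD X Ch" "COM X B f Ch"
    and "L \<subseteq> X" "finite L" "wsum L \<le> B" "\<And>x. x \<in> L \<Longrightarrow> f x = 1"
  shows "card L \<le> card (Ch X)"
proof -
  have ChL: "Ch L \<subseteq> L" using assms(1,4) unfolding is_choice_def by blast
  have "util f L \<le> util f (Ch L)"
    using assms(3,4,6) unfolding COM_def by (meson max.coboundedI1 order_refl)
  moreover have "util f (Ch L) = real (card (Ch L))"
    using util_const[of "Ch L" f 1] assms(7) ChL by auto
  moreover have "util f L = real (card L)"
    using util_const[of L f 1] assms(7) by auto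
  ultimately have "card L \<le> card (Ch L)" by simp
  also have "\<dots> \<le> card (Ch X)" using assms(2,4) unfolding LAD_def by blast
  finally show ?thesis .
qed

text \<open>The exchange argument: adding a missing expensive contract to the chosen expensive ones
  costs no more than Ch X, yet is worth more.\<close>

lemma choice_takes_high_block_or_few_low:
  assumes "is_choice X Ch" "COM X B f Ch"
    and X: "X = L \<union> H" "finite L" "finite H" "L \<inter> H = {}"
    and wage: "\<And>x. x \<in> L \<Longrightarrow> wage x = wl" "\<And>x. x \<in> H \<Longrightarrow> wage x = wu"
    and f: "\<And>x. x \<in> L \<Longrightarrow> f x = 1" "\<And>x. x \<in> H \<Longrightarrow> f x = real (card L) + 1"
  shows "H \<subseteq> Ch X \<or> real (card (Ch X \<inter> L)) * wl < wu"
proof (rule ccontr)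
  let ?C = "Ch X" and ?CL = "Ch X \<inter> L" and ?CH = "Ch X \<inter> H"
  assume "\<not> ?thesis"
  then obtain h where h: "h \<in> H" "h \<notin> ?C" and costly: "wu \<le> real (card ?CL) * wl" by auto
  have C: "?C \<subseteq> L \<union> H" using assms(1) X(1) unfolding is_choice_def by blast
  let ?Y = "insert h ?CH"
  have cardY: "card ?Y = card ?CH + 1" using h X(3) by simp
  have "wsum ?Y = real (card ?Y) * wu" using wsum_const[of ?Y wu] wage(2) h by blast
  also have "\<dots> \<le> real (card ?CL) * wl + real (card ?CH) * wu"
    using cardY costly by (simp add: algebra_simps)
  also have "\<dots> = wsum ?C"
    unfolding wsum_def using sum_two_levels[OF C X(2-4) wage] by simp
  finally have "wsum ?Y \<le> max B (wsum ?C)" by (rule max.coboundedI2)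
  moreover have "?Y \<subseteq> X" using h X(1) by blast
  ultimately have "util f ?Y \<le> util f ?C"
    using assms(2) unfolding COM_def by blast
  moreover have "util f ?Y = real (card ?Y) * (real (card L) + 1)"
    using util_const[of ?Y f] f(2) h by blast
  moreover have "util f ?C = real (card ?CL) + real (card ?CH) * (real (card L) + 1)"
    unfolding util_def using sum_two_levels[OF C X(2-4) f] by simp
  moreover have "card ?CL \<le> card L" using X(2) by (simp add: card_mono)
  ultimately show False using cardY by (simp add: algebra_simps)
qed

lemma two_wage_total_bound:
  fixes j c n :: nat and wl wu B :: real
  assumes "0 < wl" "wl \<le> wu" "B < (real n + 1) * wl" "n \<le> j + c"
    and "c = n \<or> real j * wl < wu"
  shows "wu * (B - wu) / wl < real j * wl + real c * wu"
proof -
  have "wu * (B - wu) < wu * (real n * wl + wl - wu)"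
    using assms(1-3) by (intro mult_strict_left_mono) (auto simp: algebra_simps)
  also have "\<dots> \<le> (real j * wl + real c * wu) * wl"
    using assms(5)
  proof
    assume "c = n"
    then have "real n * wu * wl \<le> (real j * wl + real c * wu) * wl"
      using assms(1) by (simp add: algebra_simps)
    moreover have "wl * wu \<le> wu * wu" using assms(1,2) by (simp add: mult_right_mono)
    ultimately show ?thesis by (simp add: algebra_simps)
  next
    assume few: "real j * wl < wu"
    have "wu * (real n * wl + wl - wu) = real n * wu * wl - wu * (wu - wl)"
      by (simp add: algebra_simps)
    also have "\<dots> \<le> real n * wu * wl - real j * wl * (wu - wl)"
      using few assms(2) by (simp add: mult_right_mono)
    also have "\<dots> = (real j * wl + (real n - real j) * wu) * wl"
      by (simp add: algebra_simps)
    also have "\<dots> \<le> (real j * wl + real c * wu) * wl"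
      using assms(1,2,4) by (intro mult_right_mono add_left_mono) auto
    finally show ?thesis .
  qed
  finally show ?thesis using assms(1) by (simp add: pos_divide_less_eq)
qed

definition low_block :: "nat \<Rightarrow> real \<Rightarrow> contract set" where
  "low_block n w = (\<lambda>i. (i, 0, w)) ` {..<n}"

definition high_block :: "nat \<Rightarrow> real \<Rightarrow> contract set" where
  "high_block n w = (\<lambda>i. (n + i, 0, w)) ` {..<n}"

lemma finite_low_block: "finite (low_block n w)"
  and finite_high_block: "finite (high_block n w)"
  unfolding low_block_def high_block_def by simp_all

lemma card_low_block: "card (low_block n w) = n"
  and card_high_block: "card (high_block n w) = n"
  unfolding low_block_def high_block_def by (simp_all add: card_image inj_on_def)

lemma low_block_Int_high_block: "low_block n w \<inter> high_block n w' = {}"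
  unfolding low_block_def high_block_def by auto

lemma wage_low_block: "x \<in> low_block n w \<Longrightarrow> wage x = w"
  and wage_high_block: "x \<in> high_block n w \<Longrightarrow> wage x = w"
  and hosp_low_block: "x \<in> low_block n w \<Longrightarrow> hosp x = 0"
  and hosp_high_block: "x \<in> high_block n w \<Longrightarrow> hosp x = 0"
  and doctor_low_block: "x \<in> low_block n w \<Longrightarrow> doctor x < n"
  and doctor_high_block: "x \<in> high_block n w \<Longrightarrow> \<not> doctor x < n"
  unfolding low_block_def high_block_def wage_def hosp_def doctor_def by auto

lemma low_block_nonempty: "0 < n \<Longrightarrow> low_block n w \<noteq> {}"
  and high_block_nonempty: "0 < n \<Longrightarrow> high_block n w \<noteq> {}"
  unfolding low_block_def high_block_def by auto

definition two_block_market :: "nat \<Rightarrow> real \<Rightarrow> real \<Rightarrow> contract set" where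
  "two_block_market n wl wu = low_block n wl \<union> high_block n wu"

definition two_block_util :: "nat \<Rightarrow> contract \<Rightarrow> real" where
  "two_block_util n x = (if doctor x < n then 1 else real n + 1)"

lemma finite_two_block_market: "finite (two_block_market n wl wu)"
  unfolding two_block_market_def by (simp add: finite_low_block finite_high_block)

lemma hosp_two_block_market: "x \<in> two_block_market n wl wu \<Longrightarrow> hosp x = 0"
  unfolding two_block_market_def using hosp_low_block hosp_high_block by blast

lemma wage_image_two_block_market: "0 < n \<Longrightarrow> wage ` two_block_market n wl wu = {wl, wu}"
  using low_block_nonempty high_block_nonempty unfolding two_block_market_def
  by (auto simp: wage_low_block wage_high_block image_Un image_constant_conv)

lemma two_block_util_nonneg: "0 \<le> two_block_util n x"
  unfolding two_block_util_def by simp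

lemma wsum_choice_two_block_market_gt:
  assumes "0 < wl" "wl \<le> wu" "real n * wl \<le> B" "B < (real n + 1) * wl"
    and Ch: "is_choice (two_block_market n wl wu) Ch" "LAD (two_block_market n wl wu) Ch"
      "COM (two_block_market n wl wu) B (two_block_util n) Ch"
  shows "wu * (B - wu) / wl < wsum (Ch (two_block_market n wl wu))"
proof -
  define L H where "L = low_block n wl" and "H = high_block n wu"
  let ?C = "Ch (L \<union> H)"
  let ?CL = "?C \<inter> L" and ?CH = "?C \<inter> H"
  note blocks = finite_low_block finite_high_block card_low_block card_high_block
    low_block_Int_high_block wage_low_block wage_high_block
  have Ch': "is_choice (L \<union> H) Ch" "LAD (L \<union> H) Ch" "COM (L \<union> H) B (two_block_util n) Ch"
    using Ch unfolding two_block_market_def L_def H_def by simp_all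
  have fL: "\<And>x. x \<in> L \<Longrightarrow> two_block_util n x = 1"
    and fH: "\<And>x. x \<in> H \<Longrightarrow> two_block_util n x = real (card L) + 1"
    unfolding L_def H_def two_block_util_def
    by (auto simp: doctor_low_block doctor_high_block blocks)
  have C: "?C \<subseteq> L \<union> H" using Ch'(1) unfolding is_choice_def by blast
  have blocks_LH: "finite L" "finite H" "L \<inter> H = {}"
    unfolding L_def H_def by (auto simp: blocks)
  have "wsum L \<le> B" using assms(3) wsum_const[of L wl] by (simp add: L_def blocks)
  then have "n \<le> card ?C"
    using card_choice_ge_affordable_unit_block[OF Ch', of L] fL by (simp add: L_def blocks)
  also have "card ?C = card (?CL \<union> ?CH)" using C by (simp add: Int_Un_distrib[symmetric] Int_absorb2)
  also have "\<dots> = card ?CL + card ?CH" using blocks_LH by (intro card_Un_disjoint) auto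
  finally have "n \<le> card ?CL + card ?CH" .
  moreover have "card ?CH = n \<or> real (card ?CL) * wl < wu"
    using choice_takes_high_block_or_few_low[OF Ch'(1,3) refl, of wl wu] fL fH
    by (auto simp: L_def H_def blocks Int_absorb1)
  ultimately have "wu * (B - wu) / wl < real (card ?CL) * wl + real (card ?CH) * wu"
    using two_wage_total_bound[OF assms(1,2,4)] by simp
  also have "\<dots> = wsum ?C"
    unfolding wsum_def using sum_two_levels[OF C blocks_LH] by (simp add: L_def H_def blocks)
  finally show ?thesis unfolding two_block_market_def L_def H_def .
qed

theorem theorem4:
  fixes wl wu B :: real
  assumes "0 < wl" and "wl \<le> wu" and "wu \<le> B"
  shows "\<exists>(h::nat) (X::contract set) (f::contract \<Rightarrow> real).
           finite X \<and> X \<noteq> {} \<and> (\<forall>x\<in>X. hosp x = h \<and> wage x > 0) \<and>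
           Min (wage ` X) = wl \<and> Max (wage ` X) = wu \<and>
           (\<forall>x\<in>X. f x \<ge> 0) \<and>
           (\<forall>Ch. is_choice X Ch \<and> LAD X Ch \<and> COM X B f Ch \<longrightarrow>
              (\<exists>X'. X' \<subseteq> X \<and> wsum (Ch X') > wu * (B - wu) / wl))"
proof -
  have "wl \<le> B" using assms(2,3) by (rule order_trans)
  then obtain n :: nat where n: "1 \<le> n" "real n * wl \<le> B" "B < (real n + 1) * wl"
    using nat_multiple_bracket[OF assms(1)] by blast
  let ?X = "two_block_market n wl wu"
  have wages: "wage ` ?X = {wl, wu}" using n(1) by (simp add: wage_image_two_block_market)
  then have "?X \<noteq> {}" "\<forall>x\<in>?X. wage x > 0" using assms(1,2) by auto
  moreover have "Min (wage ` ?X) = wl" "Max (wage ` ?X) = wu" using wages assms(2) by simp_all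
  moreover have "wsum (Ch ?X) > wu * (B - wu) / wl"
    if "is_choice ?X Ch \<and> LAD ?X Ch \<and> COM ?X B (two_block_util n) Ch" for Ch
    using wsum_choice_two_block_market_gt[OF assms(1,2) n(2,3)] that by blast
  ultimately show ?thesis
    using finite_two_block_market hosp_two_block_market two_block_util_nonneg
    by (intro exI[of _ 0] exI[of _ ?X] exI[of _ "two_block_util n"]) blast
qed

end
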